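(* Let $d\ge2$, $\lambda\ge1$, let $B$ be a magnetic field with bounded derivatives of all orders and $A$ its transversal gauge potential. Then for all $y,x,\xi\in\mathbb{R}^d$ and $1\le j\le d$, $$-i\partial_{y_j}g^{A,\lambda}_{x,\xi}(y)=i\partial_{x_j}g^{A,\lambda}_{x,\xi}(y)-\sum_{k=1}^dB_{jk}(x)\,i\partial_{\xi_k}g^{A,\lambda}_{x,\xi}(y)+\Big[A_j(y)-A_j(x)-r^{(1)}_x\big(A_j(\cdot,x)\big)(y)+r^{(1)}_x\big(A_j(x,\cdot)\big)(y)\Big]g^{A,\lambda}_{x,\xi}(y).$$
   Context: $B=(B_{jk})$, $B_{jk}\in C^\infty(\mathbb{R}^d,\mathbb{R})$, $B_{jk}=-B_{kj}$, $B$ closed, $\sup|\partial^\alpha B_{jk}|\le C_\alpha$. For $x\in\mathbb{R}^d$, $A_j(y,x):=-\sum_{k=1}^d\int_0^1s(y_k-x_k)B_{jk}(x+s(y-x))\,ds$, and $A_j(y):=A_j(y,0)$. $\varphi^A(y,x):=(y-x)\cdot\int_0^1A((1-s)x+sy)\,ds$. $g(y)=(2\pi)^{-d/2}\pi^{-d/4}e^{-|y|^2/2}$, $g^{A,\lambda}_{x,\xi}(y)=\lambda^{d/2}e^{i\xi\cdot(y-x)}g(\lambda(y-x))e^{i\varphi^A(y,x)}$. For a smooth function $f$ of $y$, $r^{(1)}_x(f)(y):=f(y)-f(x)-\nabla f(x)\cdot(y-x)$ is the remainder of the first-order Taylor expansion at $x$; here it is applied to $y\mapsto A_j(y,x)$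 and $y\mapsto A_j(x,y)$. *)

theory Defs
  imports "HOL-Analysis.Analysis"
begin

text \<open>Vectors in R^d are modelled as real^'n, with d = CARD('n).\<close>

definition pdiff :: "'n::finite \<Rightarrow> (real^'n \<Rightarrow> 'a::real_normed_vector) \<Rightarrow> real^'n \<Rightarrow> 'a" where
  "pdiff i f x = vector_derivative (\<lambda>t. f (x + t *\<^sub>R axis i 1)) (at 0)"

text \<open>Iterated partial derivative \<partial>^\<alpha>, multi-index given as a list of coordinates.\<close>
fun pdiffs :: "'n::finite list \<Rightarrow> (real^'n \<Rightarrow> 'a::real_normed_vector) \<Rightarrow> real^'n \<Rightarrow> 'a" where
  "pdiffs [] f = f"
| "pdiffs (i # is) f = pdiff i (pdiffs is f)"

definition smooth_fun :: "(real^'n::finite \<Rightarrow> real) \<Rightarrow> bool" where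
  "smooth_fun f \<longleftrightarrow>
     (\<forall>is. continuous_on UNIV (pdiffs is f) \<and>
           (\<forall>i x. (\<lambda>t. pdiffs is f (x + t *\<^sub>R axis i 1)) differentiable (at 0)))"

definition bounded_derivs :: "(real^'n::finite \<Rightarrow> real) \<Rightarrow> bool" where
  "bounded_derivs f \<longleftrightarrow> (\<forall>is. \<exists>C. \<forall>x. \<bar>pdiffs is f x\<bar> \<le> C)"

definition magnetic_field :: "('n::finite \<Rightarrow> 'n \<Rightarrow> real^'n \<Rightarrow> real) \<Rightarrow> bool" where
  "magnetic_field B \<longleftrightarrow>
     (\<forall>j k. smooth_fun (B j k) \<and> bounded_derivs (B j k)) \<and>
     (\<forall>j k x. B j k x = - B k j x) \<and>
     (\<forall>i j k x. pdiff i (B j k) x + pdiff j (B k i) x + pdiff k (B i j) x = 0)"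

definition gaugeA :: "('n::finite \<Rightarrow> 'n \<Rightarrow> real^'n \<Rightarrow> real) \<Rightarrow> 'n \<Rightarrow> real^'n \<Rightarrow> real^'n \<Rightarrow> real" where
  "gaugeA B j y x = - (\<Sum>k\<in>UNIV. integral {0..1} (\<lambda>s. s * (y$k - x$k) * B j k (x + s *\<^sub>R (y - x))))"

text \<open>\<phi>^A(y,x) = (y-x)\<cdot>\<integral>_0^1 A((1-s)x+sy) ds, with A = A(\<cdot>,0).\<close>
definition phiA :: "('n::finite \<Rightarrow> 'n \<Rightarrow> real^'n \<Rightarrow> real) \<Rightarrow> real^'n \<Rightarrow> real^'n \<Rightarrow> real" where
  "phiA B y x = (y - x) \<bullet> integral {0..1} (\<lambda>s. \<chi> j. gaugeA B j ((1 - s) *\<^sub>R x + s *\<^sub>R y) 0)"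

definition gauss :: "real^'n::finite \<Rightarrow> real" where
  "gauss y = (2 * pi) powr (- real CARD('n) / 2) * pi powr (- real CARD('n) / 4) * exp (- (norm y)\<^sup>2 / 2)"

definition coh :: "('n::finite \<Rightarrow> 'n \<Rightarrow> real^'n \<Rightarrow> real) \<Rightarrow> real \<Rightarrow> real^'n \<Rightarrow> real^'n \<Rightarrow> real^'n \<Rightarrow> complex" where
  "coh B lam x \<xi> y = complex_of_real (lam powr (real CARD('n) / 2)) * exp (\<i> * complex_of_real (\<xi> \<bullet> (y - x)))
      * complex_of_real (gauss (lam *\<^sub>R (y - x))) * exp (\<i> * complex_of_real (phiA B y x))"

definition taylor_rem1 :: "(real^'n::finite \<Rightarrow> real) \<Rightarrow> real^'n \<Rightarrow> real^'n \<Rightarrow> real" where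
  "taylor_rem1 f x y = f y - f x - (\<Sum>i\<in>UNIV. pdiff i f x * (y$i - x$i))"

end

theory Submission
  imports Defs
begin

text \<open>Each of the three derivatives of \<open>g\<close> is \<open>g\<close> itself times an explicit factor, so the
  identity reduces to one between these factors. The only non-trivial factor comes from the
  phase: \<open>\<partial>\<^sub>y\<^sub>j \<phi>(y, x) = A\<^sub>j(y) - A\<^sub>j(y, x)\<close>. Differentiating under the integral and using
  the curl relation \<open>\<partial>\<^sub>j A\<^sub>k - \<partial>\<^sub>k A\<^sub>j = B\<^sub>j\<^sub>k\<close>, which holds because \<open>B\<close> is closed, turns the
  integrand into \<open>d/ds (s A\<^sub>j(x + s(y - x)))\<close> plus the integrand defining \<open>-A\<^sub>j(y, x)\<close>.
  The x-derivative follows from the antisymmetry \<open>\<phi>(y, x) = -\<phi>(x, y)\<close>, and the Taylor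
  remainders are explicit because \<open>A\<^sub>j(x, x) = 0\<close> and the first derivatives of \<open>A\<^sub>j(-, x)\<close> and
  \<open>A\<^sub>j(x, -)\<close> at \<open>x\<close> are \<open>-B\<^sub>j\<^sub>k(x)/2\<close> and \<open>B\<^sub>j\<^sub>k(x)/2\<close>.\<close>

lemma pdiff_has_real_derivative:
  fixes f :: "real^'n::finite \<Rightarrow> real"
  assumes "\<And>p. (\<lambda>t. f (p + t *\<^sub>R axis i 1)) differentiable (at 0)"
  shows "((\<lambda>t. f (p + t *\<^sub>R axis i 1)) has_real_derivative pdiff i f (p + t *\<^sub>R axis i 1)) (at t)"
proof -
  have "((\<lambda>s. f ((p + t *\<^sub>R axis i 1) + s *\<^sub>R axis i 1)) has_real_derivative pdiff i f (p + t *\<^sub>R axis i 1)) (at 0)"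
    using assms[of "p + t *\<^sub>R axis i 1"] unfolding pdiff_def
    by (simp add: vector_derivative_works has_real_derivative_iff_has_vector_derivative)
  then have "((\<lambda>s. f (p + (s + t) *\<^sub>R axis i 1)) has_real_derivative pdiff i f (p + t *\<^sub>R axis i 1)) (at 0)"
    by (simp add: algebra_simps scaleR_add_left)
  then show ?thesis
    using DERIV_shift[of "\<lambda>s. f (p + s *\<^sub>R axis i 1)" _ 0 t] by simp
qed

lemma pdiff_has_real_derivative_scaled:
  fixes f :: "real^'n::finite \<Rightarrow> real"
  assumes "\<And>p. (\<lambda>t. f (p + t *\<^sub>R axis i 1)) differentiable (at 0)"
  shows "((\<lambda>t. f (p + (c * t) *\<^sub>R axis i 1)) has_real_derivative c * pdiff i f (p + (c * t) *\<^sub>R axis i 1)) (at t)"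
  using DERIV_chain2[OF pdiff_has_real_derivative[OF assms] DERIV_cmult_Id[of c t]] by (simp add: mult.commute)

lemma has_derivative_add_axis_direction:
  fixes f :: "real^'n::finite \<Rightarrow> real" and Q :: "real^'n \<Rightarrow> real^'n"
  assumes fQ: "((\<lambda>u. f (Q u)) has_derivative L) (at 0)"
    and Q: "continuous_on UNIV Q"
    and dif: "\<And>p. (\<lambda>t. f (p + t *\<^sub>R axis a 1)) differentiable (at 0)"
    and cont: "continuous_on UNIV (pdiff a f)"
  shows "((\<lambda>u. f (Q u + u$a *\<^sub>R axis a 1)) has_derivative (\<lambda>h. L h + h$a * pdiff a f (Q 0))) (at 0)"
proof -
  define D where "D u t = blinfun_scaleR_left (pdiff a f (Q u + t *\<^sub>R axis a 1))" for u t
  have fy: "((\<lambda>t. f (Q u + t *\<^sub>R axis a 1)) has_derivative blinfun_apply (D u t)) (at t within UNIV)" for u t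
    using pdiff_has_real_derivative[where p="Q u", OF dif]
    by (simp add: D_def has_field_derivative_def mult.commute[of _ "pdiff a f _"])
  have "continuous_on UNIV (\<lambda>(u, t). D u t)"
  proof -
    have "continuous_on UNIV (\<lambda>z::(real^'n) \<times> real. Q (fst z) + snd z *\<^sub>R axis a 1)"
      by (intro continuous_intros continuous_on_compose2[OF Q]) auto
    then have "continuous_on UNIV (\<lambda>z::(real^'n) \<times> real. pdiff a f (Q (fst z) + snd z *\<^sub>R axis a 1))"
      by (rule continuous_on_compose2[OF cont]) simp
    then show ?thesis unfolding D_def split_beta
      by (rule continuous_on_compose2[OF linear_continuous_on[OF bounded_linear_blinfun_scaleR_left], of _ _ UNIV]) simp_all
  qed
  then have Dc: "continuous (at (0, 0) within UNIV \<times> UNIV) (\<lambda>(u, t). D u t)"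
    by (simp add: continuous_on_eq_continuous_within)
  have pair: "((\<lambda>h::real^'n. (h, h$a)) has_derivative (\<lambda>h. (h, h$a))) (at 0)"
    by (intro has_derivative_Pair has_derivative_ident bounded_linear_imp_has_derivative bounded_linear_vec_nth)
  have "((\<lambda>(u, t). f (Q u + t *\<^sub>R axis a 1)) has_derivative (\<lambda>(hu, ht). L hu + D 0 0 ht))
      (at ((\<lambda>h::real^'n. (h, h$a)) 0))"
    using has_derivative_partialsI[OF _ fy Dc] fQ by simp
  from diff_chain_at[OF pair this]
  have "((\<lambda>h. f (Q h + h$a *\<^sub>R axis a 1)) has_derivative (\<lambda>h. L h + D 0 0 (h$a))) (at 0)"
    by (simp add: o_def)
  then show ?thesis by (simp add: D_def mult.commute)
qed

lemma has_derivative_continuous_pdiff: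
  fixes f :: "real^'n::finite \<Rightarrow> real"
  assumes dif: "\<And>i p. (\<lambda>t. f (p + t *\<^sub>R axis i 1)) differentiable (at 0)"
    and cont: "\<And>i. continuous_on UNIV (pdiff i f)"
  shows "(f has_derivative (\<lambda>h. \<Sum>i\<in>UNIV. h$i * pdiff i f x)) (at x)"
proof -
  have "((\<lambda>u. f (x + (\<Sum>i\<in>S. u$i *\<^sub>R axis i 1))) has_derivative (\<lambda>h. \<Sum>i\<in>S. h$i * pdiff i f x)) (at 0)"
    if "finite S" for S :: "'n set"
    using that
  proof (induction S rule: finite_induct)
    case (insert a S)
    have "continuous_on UNIV (\<lambda>u::real^'n. x + (\<Sum>i\<in>S. u$i *\<^sub>R axis i 1))"
      by (intro continuous_intros)
    from has_derivative_add_axis_direction[OF insert.IH this dif cont]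
    show ?case using insert.hyps by (simp add: ac_simps)
  qed simp
  note partial = this[of UNIV]
  have "(\<Sum>i\<in>UNIV. u$i *\<^sub>R axis i 1) = u" for u :: "real^'n"
    using basis_expansion[of u] by (simp add: scalar_mult_eq_scaleR)
  with partial have "((\<lambda>u. f (x + u)) has_derivative (\<lambda>h. \<Sum>i\<in>UNIV. h$i * pdiff i f x)) (at 0)"
    by simp
  then have "((\<lambda>z. f (x + (z - x))) has_derivative (\<lambda>h. \<Sum>i\<in>UNIV. h$i * pdiff i f x)) (at x)"
    using diff_chain_at[of "\<lambda>z. z - x" "\<lambda>h. h" x "\<lambda>h. f (x + h)"]
    by (simp add: o_def has_derivative_diff[OF has_derivative_ident has_derivative_const, simplified])
  then show ?thesis by simp
qed

lemma has_real_derivative_along_line: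
  fixes f :: "real^'n::finite \<Rightarrow> real"
  assumes "\<And>x. (f has_derivative (\<lambda>h. \<Sum>i\<in>UNIV. h$i * Df i x)) (at x)"
  shows "((\<lambda>s. f (p + s *\<^sub>R v)) has_real_derivative (\<Sum>i\<in>UNIV. v$i * Df i (p + s *\<^sub>R v))) (at s within S)"
proof -
  have "((\<lambda>s. p + s *\<^sub>R v) has_derivative (\<lambda>h. h *\<^sub>R v)) (at s within S)"
    by (auto intro!: derivative_eq_intros)
  note chain = has_derivative_compose[OF this assms]
  have "(\<lambda>h. \<Sum>i\<in>UNIV. (h *\<^sub>R v)$i * Df i (p + s *\<^sub>R v)) = (*) (\<Sum>i\<in>UNIV. v$i * Df i (p + s *\<^sub>R v))"
    by (rule ext) (simp add: sum_distrib_left mult_ac)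
  with chain show ?thesis by (simp add: has_field_derivative_def)
qed

lemma sum_axis_mult_left: "(\<Sum>m\<in>UNIV. axis l (1::real) $ m * f m) = f l"
  by (simp add: axis_def if_distrib[of "\<lambda>c. c * _"] cong: if_cong)

lemma has_real_derivative_integral01_param:
  fixes F Ft :: "real \<Rightarrow> real \<Rightarrow> real"
  assumes "\<And>t s. ((\<lambda>t. F t s) has_real_derivative Ft t s) (at t)"
    and "continuous_on UNIV (\<lambda>(t, s). Ft t s)"
    and "continuous_on UNIV (\<lambda>(t, s). F t s)"
  shows "((\<lambda>t. integral {0..1} (F t)) has_real_derivative integral {0..1} (Ft t0)) (at t0)"
proof -
  have "continuous_on UNIV (F t)" for t
    using continuous_on_compose2[OF assms(3) continuous_on_Pair[OF continuous_on_const continuous_on_id]]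
    by simp
  then have "F t integrable_on cbox 0 1" for t
    by (meson continuous_on_subset integrable_continuous subset_UNIV)
  with assms show ?thesis
    using leibniz_rule_field_derivative[of UNIV 0 1 F Ft t0]
    by (auto intro: continuous_on_subset)
qed

lemma integral01_reflect: "integral {0..1} (\<lambda>s. f (1 - s)) = integral {0..1} (f :: real \<Rightarrow> real)"
proof -
  have "integral {0..1} (\<lambda>s. f (1 - s)) = integral {(-1)-(-1)..0-(-1)} (\<lambda>s. (\<lambda>x. f (-x)) (s + (-1)))"
    by simp
  also have "\<dots> = integral {-1..0} (\<lambda>x. f (-x))"
    by (rule integral_shift_real_ivl)
  finally show ?thesis
    using Henstock_Kurzweil_Integration.integral_reflect_real[of 1 0 f] by simp
qed

lemma gauss_has_real_derivative_along_line:
  fixes w u :: "real^'n::finite"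
  shows "((\<lambda>t. gauss (w + t *\<^sub>R u)) has_real_derivative - (w \<bullet> u) * gauss w) (at 0)"
proof -
  define K where "K = (2 * pi) powr (- real CARD('n) / 2) * pi powr (- real CARD('n) / 4)"
  have e: "gauss (w + t *\<^sub>R u) = K * exp (- (w \<bullet> w + 2 * t * (w \<bullet> u) + t^2 * (u \<bullet> u)) / 2)" for t
    unfolding gauss_def K_def power2_norm_eq_inner
    by (simp add: inner_add_left inner_add_right algebra_simps power2_eq_square inner_commute)
  show ?thesis
    unfolding e using e[of 0] by (auto intro!: derivative_eq_intros simp: algebra_simps)
qed

lemma has_vector_derivative_exp_i:
  assumes "(a has_real_derivative a') (at 0)"
  shows "((\<lambda>t. exp (\<i> * complex_of_real (a t))) has_vector_derivative
           \<i> * complex_of_real a' * exp (\<i> * complex_of_real (a 0))) (at 0)"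
proof -
  have "((\<lambda>t. \<i> * complex_of_real (a t)) has_vector_derivative \<i> * complex_of_real a') (at 0)"
    by (rule has_vector_derivative_mult_right[OF has_vector_derivative_of_real[OF assms]])
  from field_vector_diff_chain_at[OF this DERIV_exp] show ?thesis by (simp add: o_def)
qed

lemma has_vector_derivative_phase_amplitude:
  fixes a g p :: "real \<Rightarrow> real" and c :: complex
  assumes "(a has_real_derivative a') (at 0)"
    and "(g has_real_derivative \<kappa> * g0) (at 0)"
    and "(p has_real_derivative p') (at 0)"
    and "g 0 = g0"
  shows "((\<lambda>t. c * exp (\<i> * complex_of_real (a t)) * complex_of_real (g t) * exp (\<i> * complex_of_real (p t)))
           has_vector_derivative
           (complex_of_real \<kappa> + \<i> * complex_of_real (a' + p')) *
           (c * exp (\<i> * complex_of_real (a 0)) * complex_of_real g0 * exp (\<i> * complex_of_real (p 0)))) (at 0)"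
  by (rule has_vector_derivative_eq_rhs,
      rule has_vector_derivative_mult[OF has_vector_derivative_mult[OF
        has_vector_derivative_mult_right[OF has_vector_derivative_exp_i[OF assms(1)]]
        has_vector_derivative_of_real[OF assms(2)]] has_vector_derivative_exp_i[OF assms(3)]])
    (simp add: assms(4) algebra_simps)

lemma pdiff_coh_xi:
  "pdiff k (\<lambda>\<xi>'. coh B lam x \<xi>' y) \<xi> = \<i> * complex_of_real ((y - x)$k) * coh B lam x \<xi> y"
proof -
  have "((\<lambda>t. (\<xi> + t *\<^sub>R axis k 1) \<bullet> (y - x)) has_real_derivative (y - x)$k) (at 0)"
    by (auto intro!: derivative_eq_intros simp: inner_add_left inner_axis')
  moreover have "((\<lambda>_. gauss (lam *\<^sub>R (y - x))) has_real_derivative 0 * gauss (lam *\<^sub>R (y - x))) (at 0)"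
    by simp
  ultimately have "((\<lambda>t. coh B lam x (\<xi> + t *\<^sub>R axis k 1) y) has_vector_derivative
      \<i> * complex_of_real ((y - x)$k) * coh B lam x \<xi> y) (at 0)"
    unfolding coh_def
    by (rule has_vector_derivative_eq_rhs[OF has_vector_derivative_phase_amplitude[OF _ _ DERIV_const refl]])
      simp_all
  then show ?thesis
    unfolding pdiff_def by (rule vector_derivative_at)
qed

definition gaugeA0 :: "('n::finite \<Rightarrow> 'n \<Rightarrow> real^'n \<Rightarrow> real) \<Rightarrow> 'n \<Rightarrow> real^'n \<Rightarrow> real" where
  "gaugeA0 B k p = gaugeA B k p 0"

text \<open>\<open>gaugeA0_deriv B k l\<close> is \<open>\<partial>\<^sub>l A\<^sub>k\<close>, computed by differentiating under the integral.\<close>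

definition gaugeA0_deriv :: "('n::finite \<Rightarrow> 'n \<Rightarrow> real^'n \<Rightarrow> real) \<Rightarrow> 'n \<Rightarrow> 'n \<Rightarrow> real^'n \<Rightarrow> real" where
  "gaugeA0_deriv B k l p =
     - integral {0..1} (\<lambda>s. s * B k l (s *\<^sub>R p) + (\<Sum>m\<in>UNIV. s^2 * p$m * pdiff l (B k m) (s *\<^sub>R p)))"

locale magnetic =
  fixes B :: "'n::finite \<Rightarrow> 'n \<Rightarrow> real^'n \<Rightarrow> real"
  assumes magnetic_field: "magnetic_field B"
begin

lemma continuous_on_pdiffs_B: "continuous_on UNIV (pdiffs is (B j k))"
  and pdiffs_B_differentiable_along_axis: "(\<lambda>t. pdiffs is (B j k) (p + t *\<^sub>R axis i 1)) differentiable (at 0)"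
  using magnetic_field unfolding magnetic_field_def smooth_fun_def by blast+

lemma continuous_on_B: "continuous_on UNIV (B j k)"
  using continuous_on_pdiffs_B[of "[]"] by simp

lemma continuous_on_pdiff_B: "continuous_on UNIV (pdiff i (B j k))"
  using continuous_on_pdiffs_B[of "[i]"] by simp

lemma B_differentiable_along_axis: "(\<lambda>t. B j k (p + t *\<^sub>R axis i 1)) differentiable (at 0)"
  using pdiffs_B_differentiable_along_axis[of "[]"] by simp

lemma B_antisym: "B j k x = - B k j x"
  using magnetic_field unfolding magnetic_field_def by blast

lemma B_closed: "pdiff i (B j k) x + pdiff j (B k i) x + pdiff k (B i j) x = 0"
  using magnetic_field unfolding magnetic_field_def by blast

lemma pdiff_B_antisym: "pdiff i (B k j) x = - pdiff i (B j k) x"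
proof -
  have "B k j = (\<lambda>x. - B j k x)"
    by (rule ext) (rule B_antisym)
  moreover have "((\<lambda>t. B j k (x + t *\<^sub>R axis i 1)) has_vector_derivative pdiff i (B j k) x) (at 0)"
    using B_differentiable_along_axis unfolding pdiff_def by (simp add: vector_derivative_works)
  then have "((\<lambda>t. - B j k (x + t *\<^sub>R axis i 1)) has_vector_derivative - pdiff i (B j k) x) (at 0)"
    by (rule has_vector_derivative_minus)
  ultimately show ?thesis
    unfolding pdiff_def by (simp add: vector_derivative_at)
qed

lemma continuous_on_B_comp [continuous_intros]:
  "continuous_on S g \<Longrightarrow> continuous_on S (\<lambda>z. B j k (g z))"
  by (rule continuous_on_compose2[OF continuous_on_B _ subset_UNIV])

lemma continuous_on_pdiff_B_comp [continuous_intros]: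
  "continuous_on S g \<Longrightarrow> continuous_on S (\<lambda>z. pdiff i (B j k) (g z))"
  by (rule continuous_on_compose2[OF continuous_on_pdiff_B _ subset_UNIV])

lemma B_has_real_derivative_along_line:
  "((\<lambda>s. B j k (p + s *\<^sub>R v)) has_real_derivative (\<Sum>i\<in>UNIV. v$i * pdiff i (B j k) (p + s *\<^sub>R v))) (at s within S)"
  by (rule has_real_derivative_along_line[OF has_derivative_continuous_pdiff[OF
        B_differentiable_along_axis continuous_on_pdiff_B]])

lemma gaugeA_integral:
  "gaugeA B j y x = - integral {0..1} (\<lambda>s. \<Sum>k\<in>UNIV. s * (y$k - x$k) * B j k (x + s *\<^sub>R (y - x)))"
  unfolding gaugeA_def
  by (subst integral_sum) (auto intro!: integrable_continuous_real continuous_intros)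

lemma gaugeA0_has_real_derivative_along_axis:
  "((\<lambda>t. gaugeA0 B k (p + t *\<^sub>R axis l 1)) has_real_derivative gaugeA0_deriv B k l p) (at 0)"
proof -
  define F where "F t s = (\<Sum>m\<in>UNIV. s * (p$m + t * axis l 1 $ m) * B k m (s *\<^sub>R p + (s * t) *\<^sub>R axis l 1))"
    for t s
  define Ft where "Ft t s = (\<Sum>m\<in>UNIV. axis l 1 $ m * (s * B k m (s *\<^sub>R p + (s * t) *\<^sub>R axis l 1))
      + s * (p$m + t * axis l 1 $ m) * (s * pdiff l (B k m) (s *\<^sub>R p + (s * t) *\<^sub>R axis l 1)))" for t s
  have eq: "gaugeA0 B k (p + t *\<^sub>R axis l 1) = - integral {0..1} (F t)" for t
    unfolding gaugeA0_def gaugeA_integral F_def by (simp add: algebra_simps)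
  have "((\<lambda>t. F t s) has_real_derivative Ft t s) (at t)" for t s
  proof -
    have dl: "((\<lambda>t. s * (p$m + t * axis l 1 $ m)) has_real_derivative s * axis l 1 $ m) (at t)" for m
      by (auto intro!: derivative_eq_intros)
    have dB: "((\<lambda>t. B k m (s *\<^sub>R p + (s * t) *\<^sub>R axis l 1)) has_real_derivative
        s * pdiff l (B k m) (s *\<^sub>R p + (s * t) *\<^sub>R axis l 1)) (at t)" for m
      by (rule pdiff_has_real_derivative_scaled[OF B_differentiable_along_axis])
    show ?thesis unfolding F_def Ft_def
      by (rule DERIV_cong[OF DERIV_sum[OF DERIV_mult[OF dl dB]]]) (simp add: algebra_simps)
  qed
  moreover have "continuous_on UNIV (\<lambda>(t, s). Ft t s)" "continuous_on UNIV (\<lambda>(t, s). F t s)"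
    unfolding Ft_def F_def split_beta by (intro continuous_intros)+
  ultimately have "((\<lambda>t. - integral {0..1} (F t)) has_real_derivative - integral {0..1} (Ft 0)) (at 0)"
    by (intro DERIV_minus has_real_derivative_integral01_param)
  moreover have "Ft 0 = (\<lambda>s. s * B k l (s *\<^sub>R p) + (\<Sum>m\<in>UNIV. s^2 * p$m * pdiff l (B k m) (s *\<^sub>R p)))"
    unfolding Ft_def by (rule ext, simp add: sum.distrib sum_axis_mult_left) (simp add: power2_eq_square mult_ac)
  ultimately show ?thesis unfolding eq gaugeA0_deriv_def by simp
qed

lemma continuous_on_gaugeA0_deriv: "continuous_on UNIV (gaugeA0_deriv B k l)"
proof -
  have "continuous_on UNIV (\<lambda>p. integral (cbox 0 1)
      (\<lambda>s. s * B k l (s *\<^sub>R p) + (\<Sum>m\<in>UNIV. s^2 * p$m * pdiff l (B k m) (s *\<^sub>R p))))"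
    by (rule integral_continuous_on_param) (auto simp: split_beta intro!: continuous_intros)
  then show ?thesis unfolding gaugeA0_deriv_def[abs_def] by (auto intro!: continuous_intros)
qed

lemma gaugeA0_differentiable_along_axis: "(\<lambda>t. gaugeA0 B k (p + t *\<^sub>R axis l 1)) differentiable (at 0)"
  using gaugeA0_has_real_derivative_along_axis real_differentiable_def by blast

lemma pdiff_gaugeA0: "pdiff l (gaugeA0 B k) p = gaugeA0_deriv B k l p"
  using gaugeA0_has_real_derivative_along_axis unfolding pdiff_def
  by (simp add: vector_derivative_at has_real_derivative_iff_has_vector_derivative)

lemma gaugeA0_has_derivative:
  "(gaugeA0 B k has_derivative (\<lambda>h. \<Sum>i\<in>UNIV. h$i * gaugeA0_deriv B k i x)) (at x)"
proof -
  have cont: "continuous_on UNIV (pdiff i (gaugeA0 B k))" for i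
    using continuous_on_gaugeA0_deriv by (simp add: pdiff_gaugeA0[abs_def])
  from has_derivative_continuous_pdiff[OF gaugeA0_differentiable_along_axis cont]
  show ?thesis by (simp add: pdiff_gaugeA0)
qed

lemma continuous_on_gaugeA0_comp [continuous_intros]:
  "continuous_on S g \<Longrightarrow> continuous_on S (\<lambda>z. gaugeA0 B k (g z))"
  by (rule continuous_on_compose2[OF continuous_at_imp_continuous_on _ subset_UNIV])
    (blast intro: has_derivative_continuous gaugeA0_has_derivative)

lemma continuous_on_gaugeA0_deriv_comp [continuous_intros]:
  "continuous_on S g \<Longrightarrow> continuous_on S (\<lambda>z. gaugeA0_deriv B k l (g z))"
  by (rule continuous_on_compose2[OF continuous_on_gaugeA0_deriv _ subset_UNIV])

lemma gaugeA0_has_real_derivative_along_line: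
  "((\<lambda>s. gaugeA0 B j (p + s *\<^sub>R v)) has_real_derivative (\<Sum>i\<in>UNIV. v$i * gaugeA0_deriv B j i (p + s *\<^sub>R v)))
     (at s within S)"
  by (rule has_real_derivative_along_line[OF gaugeA0_has_derivative])

text \<open>Closedness of \<open>B\<close> makes the integrand of the difference the exact derivative
  \<open>d/ds (s\<^sup>2 B\<^sub>l\<^sub>k(s p))\<close>.\<close>

lemma gaugeA0_curl: "gaugeA0_deriv B k l p - gaugeA0_deriv B l k p = B l k p"
proof -
  have closed: "pdiff k (B l m) x - pdiff l (B k m) x = pdiff m (B l k) x" for m x
    using B_closed[of l k m x] pdiff_B_antisym[of k m l x] by linarith
  have "((\<lambda>s. s^2 * B l k (s *\<^sub>R p)) has_real_derivative
      2 * s * B l k (s *\<^sub>R p) + s^2 * (\<Sum>m\<in>UNIV. p$m * pdiff m (B l k) (s *\<^sub>R p))) (at s within S)" for s S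
    using B_has_real_derivative_along_line[of l k 0 p s S]
    by (auto intro!: derivative_eq_intros simp: algebra_simps)
  then have exact: "((\<lambda>s. 2 * s * B l k (s *\<^sub>R p) + s^2 * (\<Sum>m\<in>UNIV. p$m * pdiff m (B l k) (s *\<^sub>R p)))
      has_integral B l k p) {0..1}"
    using fundamental_theorem_of_calculus[of 0 1 "\<lambda>s. s^2 * B l k (s *\<^sub>R p)"]
    by (simp add: has_real_derivative_iff_has_vector_derivative)
  have "gaugeA0_deriv B k l p - gaugeA0_deriv B l k p =
      integral {0..1} (\<lambda>s. (s * B l k (s *\<^sub>R p) + (\<Sum>m\<in>UNIV. s^2 * p$m * pdiff k (B l m) (s *\<^sub>R p)))
        - (s * B k l (s *\<^sub>R p) + (\<Sum>m\<in>UNIV. s^2 * p$m * pdiff l (B k m) (s *\<^sub>R p))))"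
    unfolding gaugeA0_deriv_def
    by (subst integral_diff) (auto intro!: integrable_continuous_real continuous_intros)
  also have "\<dots> = integral {0..1} (\<lambda>s. 2 * s * B l k (s *\<^sub>R p) + s^2 * (\<Sum>m\<in>UNIV. p$m * pdiff m (B l k) (s *\<^sub>R p)))"
  proof (rule integral_cong)
    fix s :: real
    have "(\<Sum>m\<in>UNIV. s^2 * p$m * pdiff k (B l m) (s *\<^sub>R p)) - (\<Sum>m\<in>UNIV. s^2 * p$m * pdiff l (B k m) (s *\<^sub>R p))
        = (\<Sum>m\<in>UNIV. s^2 * p$m * (pdiff k (B l m) (s *\<^sub>R p) - pdiff l (B k m) (s *\<^sub>R p)))"
      by (simp add: sum_subtractf[symmetric] right_diff_distrib)
    also have "\<dots> = s^2 * (\<Sum>m\<in>UNIV. p$m * pdiff m (B l k) (s *\<^sub>R p))"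
      by (simp add: closed sum_distrib_left mult_ac)
    finally show "(s * B l k (s *\<^sub>R p) + (\<Sum>m\<in>UNIV. s^2 * p$m * pdiff k (B l m) (s *\<^sub>R p)))
        - (s * B k l (s *\<^sub>R p) + (\<Sum>m\<in>UNIV. s^2 * p$m * pdiff l (B k m) (s *\<^sub>R p)))
        = 2 * s * B l k (s *\<^sub>R p) + s^2 * (\<Sum>m\<in>UNIV. p$m * pdiff m (B l k) (s *\<^sub>R p))"
      using B_antisym[of k l "s *\<^sub>R p"] by (simp add: algebra_simps)
  qed
  also have "\<dots> = B l k p"
    using exact by (rule integral_unique)
  finally show ?thesis .
qed

lemma phiA_integral:
  "phiA B y x = integral {0..1} (\<lambda>s. \<Sum>k\<in>UNIV. (y - x)$k * gaugeA0 B k (x + s *\<^sub>R (y - x)))"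
proof -
  have "(1 - s) *\<^sub>R x + s *\<^sub>R y = x + s *\<^sub>R (y - x)" for s
    by (simp add: algebra_simps)
  then have "phiA B y x = (y - x) \<bullet> integral {0..1} (\<lambda>s. \<chi> k. gaugeA0 B k (x + s *\<^sub>R (y - x)))"
    unfolding phiA_def gaugeA0_def by simp
  also have "\<dots> = (\<Sum>k\<in>UNIV. (y - x)$k * integral {0..1} (\<lambda>s. gaugeA0 B k (x + s *\<^sub>R (y - x))))"
    unfolding inner_vec_def
    by (subst integral_component_eq_cart[symmetric]) (auto intro!: integrable_continuous_real continuous_intros)
  also have "\<dots> = integral {0..1} (\<lambda>s. \<Sum>k\<in>UNIV. (y - x)$k * gaugeA0 B k (x + s *\<^sub>R (y - x)))"
    by (subst integral_sum) (auto intro!: integrable_continuous_real continuous_intros)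
  finally show ?thesis .
qed

lemma phiA_antisym: "phiA B y x = - phiA B x y"
proof -
  have "phiA B x y = integral {0..1} (\<lambda>s. (\<lambda>s. \<Sum>k\<in>UNIV. (x - y)$k * gaugeA0 B k (y + s *\<^sub>R (x - y))) (1 - s))"
    unfolding phiA_integral by (rule integral01_reflect[symmetric])
  also have "\<dots> = - phiA B y x"
  proof -
    have "y + (1 - s) *\<^sub>R (x - y) = x + s *\<^sub>R (y - x)" for s
      by (simp add: algebra_simps)
    then show ?thesis
      unfolding phiA_integral integral_neg[symmetric] by (simp add: sum_negf[symmetric] algebra_simps)
  qed
  finally show ?thesis by simp
qed

lemma phiA_has_real_derivative_along_axis_integral:
  "((\<lambda>t. phiA B (y + t *\<^sub>R axis j 1) x) has_real_derivative
     integral {0..1} (\<lambda>s. gaugeA0 B j (x + s *\<^sub>R (y - x))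
       + s * (\<Sum>k\<in>UNIV. (y - x)$k * gaugeA0_deriv B k j (x + s *\<^sub>R (y - x))))) (at 0)"
proof -
  define q where "q t s = x + s *\<^sub>R (y - x) + (s * t) *\<^sub>R axis j 1" for t s
  define F where "F t s = (\<Sum>k\<in>UNIV. ((y - x)$k + t * axis j 1 $ k) * gaugeA0 B k (q t s))" for t s
  define Ft where "Ft t s = (\<Sum>k\<in>UNIV. axis j 1 $ k * gaugeA0 B k (q t s)
      + ((y - x)$k + t * axis j 1 $ k) * (s * gaugeA0_deriv B k j (q t s)))" for t s
  have eq: "phiA B (y + t *\<^sub>R axis j 1) x = integral {0..1} (F t)" for t
    unfolding phiA_integral F_def q_def by (rule integral_cong) (simp add: algebra_simps)
  have "((\<lambda>t. F t s) has_real_derivative Ft t s) (at t)" for t s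
  proof -
    have dl: "((\<lambda>t. (y - x)$k + t * axis j 1 $ k) has_real_derivative axis j 1 $ k) (at t)" for k
      by (auto intro!: derivative_eq_intros)
    have dA: "((\<lambda>t. gaugeA0 B k (q t s)) has_real_derivative s * gaugeA0_deriv B k j (q t s)) (at t)" for k
      using pdiff_has_real_derivative_scaled[OF gaugeA0_differentiable_along_axis]
      unfolding q_def pdiff_gaugeA0 .
    show ?thesis unfolding F_def Ft_def
      by (rule DERIV_cong[OF DERIV_sum[OF DERIV_mult[OF dl dA]]]) (simp add: algebra_simps)
  qed
  moreover have "continuous_on UNIV (\<lambda>(t, s). Ft t s)" "continuous_on UNIV (\<lambda>(t, s). F t s)"
    unfolding Ft_def F_def q_def split_beta by (intro continuous_intros)+
  ultimately have "((\<lambda>t. integral {0..1} (F t)) has_real_derivative integral {0..1} (Ft 0)) (at 0)"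
    by (rule has_real_derivative_integral01_param)
  moreover have "Ft 0 = (\<lambda>s. gaugeA0 B j (x + s *\<^sub>R (y - x))
      + s * (\<Sum>k\<in>UNIV. (y - x)$k * gaugeA0_deriv B k j (x + s *\<^sub>R (y - x))))"
    unfolding Ft_def q_def
    by (rule ext, simp add: sum.distrib sum_axis_mult_left) (simp add: sum_distrib_left mult_ac)
  ultimately show ?thesis unfolding eq by simp
qed

text \<open>By the curl relation the integrand above is \<open>d/ds (s A\<^sub>j(x + s(y - x)))\<close>
  plus the integrand defining \<open>-A\<^sub>j(y, x)\<close>.\<close>

lemma phiA_has_real_derivative_along_axis:
  "((\<lambda>t. phiA B (y + t *\<^sub>R axis j 1) x) has_real_derivative gaugeA0 B j y - gaugeA B j y x) (at 0)"
proof -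
  define q where "q s = x + s *\<^sub>R (y - x)" for s
  have "((\<lambda>s. s * gaugeA0 B j (q s)) has_real_derivative
      gaugeA0 B j (q s) + s * (\<Sum>k\<in>UNIV. (y - x)$k * gaugeA0_deriv B j k (q s))) (at s within S)" for s S
    unfolding q_def
    by (rule DERIV_cong[OF DERIV_mult[OF _ gaugeA0_has_real_derivative_along_line]])
      (auto intro!: derivative_eq_intros)
  then have exact: "((\<lambda>s. gaugeA0 B j (q s) + s * (\<Sum>k\<in>UNIV. (y - x)$k * gaugeA0_deriv B j k (q s)))
      has_integral gaugeA0 B j y) {0..1}"
    using fundamental_theorem_of_calculus[of 0 1 "\<lambda>s. s * gaugeA0 B j (q s)"]
    by (simp add: q_def has_real_derivative_iff_has_vector_derivative)
  have curl: "gaugeA0_deriv B k j z = gaugeA0_deriv B j k z + B j k z" for k z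
    using gaugeA0_curl[of k j z] by linarith
  have "integral {0..1} (\<lambda>s. gaugeA0 B j (q s) + s * (\<Sum>k\<in>UNIV. (y - x)$k * gaugeA0_deriv B k j (q s)))
      = integral {0..1} (\<lambda>s. (gaugeA0 B j (q s) + s * (\<Sum>k\<in>UNIV. (y - x)$k * gaugeA0_deriv B j k (q s)))
          + (\<Sum>k\<in>UNIV. s * (y$k - x$k) * B j k (q s)))"
    by (rule integral_cong) (simp add: curl distrib_left sum.distrib sum_distrib_left mult_ac)
  also have "\<dots> = gaugeA0 B j y - gaugeA B j y x"
    unfolding gaugeA_integral q_def integral_unique[OF exact[unfolded q_def], symmetric]
    by (subst integral_add) (auto intro!: integrable_continuous_real continuous_intros)
  finally show ?thesis
    using phiA_has_real_derivative_along_axis_integral[of y j x] unfolding q_def by simp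
qed

lemma gaugeA_diagonal: "gaugeA B j x x = 0"
  unfolding gaugeA_def by simp

lemma gaugeA_has_real_derivative_at_diagonal:
  "((\<lambda>t. gaugeA B j (x + t *\<^sub>R v) (x + t *\<^sub>R w)) has_real_derivative
     - (\<Sum>k\<in>UNIV. (v - w)$k * B j k x) / 2) (at 0)"
proof -
  define q where "q t s = x + t *\<^sub>R (w + s *\<^sub>R (v - w))" for t s
  define F where "F t s = (\<Sum>k\<in>UNIV. s * (t * (v - w)$k) * B j k (q t s))" for t s
  define Ft where "Ft t s = (\<Sum>k\<in>UNIV. s * (v - w)$k * B j k (q t s)
      + (\<Sum>i\<in>UNIV. (w + s *\<^sub>R (v - w))$i * pdiff i (B j k) (q t s)) * (s * (t * (v - w)$k)))" for t s
  have eq: "gaugeA B j (x + t *\<^sub>R v) (x + t *\<^sub>R w) = - integral {0..1} (F t)" for t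
    unfolding gaugeA_integral F_def q_def by (simp add: algebra_simps)
  have "((\<lambda>t. F t s) has_real_derivative Ft t s) (at t)" for t s
  proof -
    have dl: "((\<lambda>t. s * (t * (v - w)$k)) has_real_derivative s * (v - w)$k) (at t)" for k
      by (auto intro!: derivative_eq_intros)
    show ?thesis unfolding F_def Ft_def q_def
      by (rule DERIV_sum[OF DERIV_mult[OF dl B_has_real_derivative_along_line]])
  qed
  moreover have "continuous_on UNIV (\<lambda>(t, s). Ft t s)" "continuous_on UNIV (\<lambda>(t, s). F t s)"
    unfolding Ft_def F_def q_def split_beta by (intro continuous_intros)+
  ultimately have "((\<lambda>t. - integral {0..1} (F t)) has_real_derivative - integral {0..1} (Ft 0)) (at 0)"
    by (intro DERIV_minus has_real_derivative_integral01_param)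
  moreover have "((\<lambda>s. s * C) has_integral C / 2) {0..1}" for C :: real
  proof -
    have "((\<lambda>s. s^2 / 2 * C) has_real_derivative s * C) (at s within S)" for s S
      by (auto intro!: derivative_eq_intros simp: power2_eq_square)
    then show ?thesis
      using fundamental_theorem_of_calculus[of 0 1 "\<lambda>s. s^2 / 2 * C" "\<lambda>s. s * C"]
      by (simp add: has_real_derivative_iff_has_vector_derivative)
  qed
  moreover have "Ft 0 = (\<lambda>s. s * (\<Sum>k\<in>UNIV. (v - w)$k * B j k x))"
    unfolding Ft_def q_def by (simp add: sum_distrib_left mult_ac)
  ultimately show ?thesis
    unfolding eq by (simp add: integral_unique)
qed

lemma pdiff_gaugeA_first_at_diagonal: "pdiff l (\<lambda>y'. gaugeA B j y' x) x = - B j l x / 2"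
  using gaugeA_has_real_derivative_at_diagonal[of j x "axis l 1" 0]
  unfolding pdiff_def
  by (simp add: vector_derivative_at has_real_derivative_iff_has_vector_derivative sum_axis_mult_left)

lemma pdiff_gaugeA_second_at_diagonal: "pdiff l (\<lambda>y'. gaugeA B j x y') x = B j l x / 2"
  using gaugeA_has_real_derivative_at_diagonal[of j x 0 "axis l 1"]
  unfolding pdiff_def
  by (simp add: vector_derivative_at has_real_derivative_iff_has_vector_derivative sum_negf sum_axis_mult_left)

lemma taylor_rem1_gaugeA_first:
  "taylor_rem1 (\<lambda>y'. gaugeA B j y' x) x y = gaugeA B j y x + (\<Sum>k\<in>UNIV. B j k x * (y - x)$k) / 2"
  unfolding taylor_rem1_def pdiff_gaugeA_first_at_diagonal gaugeA_diagonal
  by (simp add: sum_divide_distrib sum_negf[symmetric])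

lemma taylor_rem1_gaugeA_second:
  "taylor_rem1 (\<lambda>y'. gaugeA B j x y') x y = gaugeA B j x y - (\<Sum>k\<in>UNIV. B j k x * (y - x)$k) / 2"
  unfolding taylor_rem1_def pdiff_gaugeA_second_at_diagonal gaugeA_diagonal
  by (simp add: sum_divide_distrib)

lemma pdiff_coh_y:
  "pdiff j (\<lambda>y'. coh B lam x \<xi> y') y =
     (complex_of_real (- (lam^2 * (y - x)$j)) + \<i> * complex_of_real (\<xi>$j + gaugeA0 B j y - gaugeA B j y x))
     * coh B lam x \<xi> y"
proof -
  have phase: "((\<lambda>t. \<xi> \<bullet> (y + t *\<^sub>R axis j 1 - x)) has_real_derivative \<xi>$j) (at 0)"
    by (auto intro!: derivative_eq_intros simp: inner_diff_right inner_add_right inner_axis)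
  have amplitude: "((\<lambda>t. gauss (lam *\<^sub>R (y + t *\<^sub>R axis j 1 - x))) has_real_derivative
      (- (lam^2 * (y - x)$j)) * gauss (lam *\<^sub>R (y - x))) (at 0)"
    using gauss_has_real_derivative_along_line[of "lam *\<^sub>R (y - x)" "lam *\<^sub>R axis j 1"]
    by (simp add: algebra_simps inner_axis power2_eq_square)
  have "((\<lambda>t. coh B lam x \<xi> (y + t *\<^sub>R axis j 1)) has_vector_derivative
      (complex_of_real (- (lam^2 * (y - x)$j)) + \<i> * complex_of_real (\<xi>$j + gaugeA0 B j y - gaugeA B j y x))
      * coh B lam x \<xi> y) (at 0)"
    unfolding coh_def
    by (rule has_vector_derivative_eq_rhs[OF has_vector_derivative_phase_amplitude[OF
          phase amplitude phiA_has_real_derivative_along_axis]]) (simp_all add: add_diff_eq)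
  then show ?thesis
    unfolding pdiff_def by (rule vector_derivative_at)
qed

lemma pdiff_coh_x:
  "pdiff j (\<lambda>x'. coh B lam x' \<xi> y) x =
     (complex_of_real (lam^2 * (y - x)$j) - \<i> * complex_of_real (\<xi>$j + gaugeA0 B j x - gaugeA B j x y))
     * coh B lam x \<xi> y"
proof -
  have phase: "((\<lambda>t. \<xi> \<bullet> (y - (x + t *\<^sub>R axis j 1))) has_real_derivative - \<xi>$j) (at 0)"
    by (auto intro!: derivative_eq_intros simp: inner_diff_right inner_add_right inner_axis)
  have amplitude: "((\<lambda>t. gauss (lam *\<^sub>R (y - (x + t *\<^sub>R axis j 1)))) has_real_derivative
      (lam^2 * (y - x)$j) * gauss (lam *\<^sub>R (y - x))) (at 0)"
    using gauss_has_real_derivative_along_line[of "lam *\<^sub>R (y - x)" "- lam *\<^sub>R axis j 1"]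
    by (simp add: algebra_simps inner_axis power2_eq_square)
  have phi: "((\<lambda>t. phiA B y (x + t *\<^sub>R axis j 1)) has_real_derivative
      - (gaugeA0 B j x - gaugeA B j x y)) (at 0)"
    unfolding phiA_antisym[of y] by (rule DERIV_minus[OF phiA_has_real_derivative_along_axis])
  have "((\<lambda>t. coh B lam (x + t *\<^sub>R axis j 1) \<xi> y) has_vector_derivative
      (complex_of_real (lam^2 * (y - x)$j) - \<i> * complex_of_real (\<xi>$j + gaugeA0 B j x - gaugeA B j x y))
      * coh B lam x \<xi> y) (at 0)"
    unfolding coh_def
    by (rule has_vector_derivative_eq_rhs[OF has_vector_derivative_phase_amplitude[OF phase amplitude phi]])
      (simp_all add: algebra_simps)
  then show ?thesis
    unfolding pdiff_def by (rule vector_derivative_at)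
qed

end

theorem lemma6p1:
  fixes B :: "'n::finite \<Rightarrow> 'n \<Rightarrow> real^'n \<Rightarrow> real"
    and lam :: real and x y \<xi> :: "real^'n" and j :: 'n
  assumes "CARD('n) \<ge> 2"
    and "lam \<ge> 1"
    and "magnetic_field B"
  shows "- \<i> * pdiff j (\<lambda>y'. coh B lam x \<xi> y') y =
           \<i> * pdiff j (\<lambda>x'. coh B lam x' \<xi> y) x
         - (\<Sum>k\<in>UNIV. complex_of_real (B j k x) * \<i> * pdiff k (\<lambda>\<xi>'. coh B lam x \<xi>' y) \<xi>)
         + complex_of_real (gaugeA B j y 0 - gaugeA B j x 0
              - taylor_rem1 (\<lambda>y'. gaugeA B j y' x) x y
              + taylor_rem1 (\<lambda>y'. gaugeA B j x y') x y) * coh B lam x \<xi> y"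
proof -
  \<comment> \<open>The identity holds for every \<open>lam\<close> and every dimension; only \<open>magnetic_field B\<close> is used.\<close>
  interpret magnetic B by (rule magnetic.intro) (rule assms(3))
  have "(\<Sum>k\<in>UNIV. complex_of_real (B j k x) * \<i> * pdiff k (\<lambda>\<xi>'. coh B lam x \<xi>' y) \<xi>)
      = - complex_of_real (\<Sum>k\<in>UNIV. B j k x * (y - x)$k) * coh B lam x \<xi> y"
    unfolding pdiff_coh_xi by (simp add: sum_distrib_left sum_distrib_right sum_negf[symmetric] algebra_simps)
  then show ?thesis
    unfolding pdiff_coh_y pdiff_coh_x taylor_rem1_gaugeA_first taylor_rem1_gaugeA_second
    by (simp add: gaugeA0_def algebra_simps)
qed

end
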